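(* Let $(X,\rho)$ be a complete metric space, $\varphi\in C(\mathbb T,X)$ positively Lagrange stable, and $\tau\in\mathbb T$, $\tau>0$. Then $\varphi$ is $S$-asymptotically $\tau$-periodic, i.e. $\lim_{t\to+\infty}\rho(\varphi(t+\tau),\varphi(t))=0$, if and only if every $\psi\in\omega_\varphi$ is $\tau$-periodic ($\psi(t+\tau)=\psi(t)$ for all $t\in\mathbb T$).
   Context: $\mathbb T\in\{\mathbb R,\mathbb Z,\mathbb R_+,\mathbb Z_+\}$. $C(\mathbb T,X)$ carries the compact-open topology (metric $d(\varphi,\psi)=\sup_{L>0}\min\{\max_{|t|\le L}\rho(\varphi(t),\psi(t)),L^{-1}\}$), with shifts $\varphi^h(t)=\varphi(t+h)$. $\varphi$ is positively Lagrange stable if $\{\varphi^h:h\in\mathbb T,h\ge0\}$ is precompact in $C(\mathbb T,X)$. $\omega_\varphi$ is the set of limits in $C(\mathbb T,X)$ of $\varphi^{h_n}$ with $h_n\in\mathbb T$, $h_n\to+\infty$. *)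

theory Defs
  imports "HOL-Analysis.Analysis"
begin

definition time_set :: "real set \<Rightarrow> bool" where
  "time_set T \<longleftrightarrow> T = UNIV \<or> T = \<int> \<or> T = {0..} \<or> T = \<nat>"

definition shift :: "(real \<Rightarrow> 'a) \<Rightarrow> real \<Rightarrow> real \<Rightarrow> 'a" where
  "shift \<phi> h = (\<lambda>t. \<phi> (t + h))"

text \<open>Convergence in C(T,X) with the compact-open topology (equivalently, in the metric d):
  uniform convergence on every bounded piece T \<inter> [-L,L].\<close>
definition co_converges :: "real set \<Rightarrow> (nat \<Rightarrow> real \<Rightarrow> 'a::metric_space) \<Rightarrow> (real \<Rightarrow> 'a) \<Rightarrow> bool" where
  "co_converges T f \<psi> \<longleftrightarrow>
     (\<forall>L>0. \<forall>e>0. \<forall>\<^sub>F n in sequentially. \<forall>t\<in>T. \<bar>t\<bar> \<le> L \<longrightarrow> dist (f n t) (\<psi> t) < e)"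

text \<open>Positive Lagrange stability: phi \<in> C(T,X) and the positive semi-orbit of shifts is
  precompact in C(T,X), i.e. every sequence of shifts has a subsequence converging in C(T,X).\<close>
definition pos_lagrange_stable :: "real set \<Rightarrow> (real \<Rightarrow> 'a::metric_space) \<Rightarrow> bool" where
  "pos_lagrange_stable T \<phi> \<longleftrightarrow> continuous_on T \<phi> \<and>
     (\<forall>h::nat \<Rightarrow> real. (\<forall>n. h n \<in> T \<and> h n \<ge> 0) \<longrightarrow>
        (\<exists>r \<psi>. strict_mono r \<and> continuous_on T \<psi> \<and>
               co_converges T (\<lambda>n. shift \<phi> (h (r n))) \<psi>))"

definition omega_limit :: "real set \<Rightarrow> (real \<Rightarrow> 'a::metric_space) \<Rightarrow> (real \<Rightarrow> 'a) set" where
  "omega_limit T \<phi> = {\<psi>. continuous_on T \<psi> \<and>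
     (\<exists>h::nat \<Rightarrow> real. (\<forall>n. h n \<in> T) \<and> filterlim h at_top sequentially \<and>
        co_converges T (\<lambda>n. shift \<phi> (h n)) \<psi>)}"

definition periodic_on :: "real set \<Rightarrow> real \<Rightarrow> (real \<Rightarrow> 'a) \<Rightarrow> bool" where
  "periodic_on T \<tau> \<psi> \<longleftrightarrow> (\<forall>t\<in>T. \<psi> (t + \<tau>) = \<psi> t)"

definition S_asymp_periodic :: "real set \<Rightarrow> real \<Rightarrow> (real \<Rightarrow> 'a::metric_space) \<Rightarrow> bool" where
  "S_asymp_periodic T \<tau> \<phi> \<longleftrightarrow>
     (\<forall>e>0. \<exists>L. \<forall>t\<in>T. t \<ge> L \<longrightarrow> dist (\<phi> (t + \<tau>)) (\<phi> t) < e)"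

end

theory Submission
  imports Defs
begin

text \<open>Convergence in C(T,X) implies pointwise convergence, so for \<psi> = lim \<phi>^(h n) in the
  \<omega>-limit set, \<rho>(\<psi>(t + \<tau>), \<psi>(t)) is the limit of \<rho>(\<phi>(t + h n + \<tau>), \<phi>(t + h n)), which
  vanishes under S-asymptotic periodicity. Conversely, if \<phi> is not S-asymptotically
  \<tau>-periodic, there are times h n \<rightarrow> \<infinity> with \<rho>(\<phi>(h n + \<tau>), \<phi>(h n)) \<ge> \<epsilon>; Lagrange stability
  extracts a subsequence of shifts converging to some \<psi> in the \<omega>-limit set, and then
  \<rho>(\<psi>(\<tau>), \<psi>(0)) \<ge> \<epsilon>, so \<psi> is not \<tau>-periodic.\<close>

lemma time_set_zero: "time_set T \<Longrightarrow> 0 \<in> T"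
  unfolding time_set_def by auto

lemma time_set_add: "time_set T \<Longrightarrow> a \<in> T \<Longrightarrow> b \<in> T \<Longrightarrow> a + b \<in> T"
  unfolding time_set_def by (auto intro: Ints_add Nats_add)

lemma co_converges_imp_tendsto:
  assumes "co_converges T f \<psi>" and "t \<in> T"
  shows "(\<lambda>n. f n t) \<longlonglongrightarrow> \<psi> t"
proof (rule tendstoI)
  fix e :: real assume "e > 0"
  have "\<bar>t\<bar> + 1 > 0" by simp
  from assms(1)[unfolded co_converges_def, rule_format, OF this \<open>e > 0\<close>]
  show "\<forall>\<^sub>F n in sequentially. dist (f n t) (\<psi> t) < e"
    by eventually_elim (use assms(2) in auto)
qed

lemma S_asymp_periodic_imp_tendsto:
  assumes "S_asymp_periodic T \<tau> \<phi>" and "\<forall>n. h n \<in> T" and "filterlim h at_top sequentially"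
  shows "(\<lambda>n. dist (\<phi> (h n + \<tau>)) (\<phi> (h n))) \<longlonglongrightarrow> 0"
proof (rule tendstoI)
  fix e :: real assume "e > 0"
  then obtain L where L: "\<forall>t\<in>T. t \<ge> L \<longrightarrow> dist (\<phi> (t + \<tau>)) (\<phi> t) < e"
    using assms(1) unfolding S_asymp_periodic_def by blast
  from assms(3) have "\<forall>\<^sub>F n in sequentially. h n \<ge> L"
    by (simp add: filterlim_at_top)
  then show "\<forall>\<^sub>F n in sequentially. dist (dist (\<phi> (h n + \<tau>)) (\<phi> (h n))) 0 < e"
    by eventually_elim (use L assms(2) in auto)
qed

lemma not_S_asymp_periodicE:
  assumes "\<not> S_asymp_periodic T \<tau> \<phi>"
  obtains e h where "e > 0" and "\<forall>n. h n \<in> T \<and> real n \<le> h n"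
    and "\<forall>n. e \<le> dist (\<phi> (h n + \<tau>)) (\<phi> (h n))"
proof -
  obtain e where "e > 0" and "\<forall>L. \<exists>t\<in>T. t \<ge> L \<and> e \<le> dist (\<phi> (t + \<tau>)) (\<phi> t)"
    using assms unfolding S_asymp_periodic_def by (auto simp: not_less)
  then have "\<forall>n::nat. \<exists>t. t \<in> T \<and> real n \<le> t \<and> e \<le> dist (\<phi> (t + \<tau>)) (\<phi> t)"
    by blast
  from choice[OF this] obtain h
    where "\<forall>n. h n \<in> T \<and> real n \<le> h n \<and> e \<le> dist (\<phi> (h n + \<tau>)) (\<phi> (h n))"
    by blast
  with \<open>e > 0\<close> show thesis using that by blast
qed

lemma pos_lagrange_stable_omega_limit_subseq:
  assumes "pos_lagrange_stable T \<phi>" and "\<forall>n. h n \<in> T \<and> 0 \<le> h n"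
    and "filterlim h at_top sequentially"
  obtains r \<psi> where "strict_mono r" and "\<psi> \<in> omega_limit T \<phi>"
    and "co_converges T (\<lambda>n. shift \<phi> (h (r n))) \<psi>"
proof -
  obtain r \<psi> where r: "strict_mono r" and "continuous_on T \<psi>"
    and conv: "co_converges T (\<lambda>n. shift \<phi> (h (r n))) \<psi>"
    using assms(1)[unfolded pos_lagrange_stable_def, THEN conjunct2, THEN spec[of _ h], THEN mp, OF assms(2)]
    by blast
  have "filterlim (\<lambda>n. h (r n)) at_top sequentially"
    using filterlim_compose[OF assms(3) filterlim_subseq[OF r]] .
  then have "\<psi> \<in> omega_limit T \<phi>"
    unfolding omega_limit_def mem_Collect_eq
    using \<open>continuous_on T \<psi>\<close> conv assms(2) by (intro conjI exI[of _ "\<lambda>n. h (r n)"]) auto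
  with r conv show thesis using that by blast
qed

lemma omega_limit_periodic_if_S_asymp_periodic:
  assumes "time_set T" and "\<tau> \<in> T" and "S_asymp_periodic T \<tau> \<phi>"
    and "\<psi> \<in> omega_limit T \<phi>"
  shows "periodic_on T \<tau> \<psi>"
  unfolding periodic_on_def
proof
  fix t assume "t \<in> T"
  obtain h where h: "\<forall>n. h n \<in> T" and h_lim: "filterlim h at_top sequentially"
    and conv: "co_converges T (\<lambda>n. shift \<phi> (h n)) \<psi>"
    using assms(4) unfolding omega_limit_def by blast
  have shifted: "(\<lambda>n. \<phi> (t + h n + \<tau>)) \<longlonglongrightarrow> \<psi> (t + \<tau>)"
    using co_converges_imp_tendsto[OF conv time_set_add[OF assms(1) \<open>t \<in> T\<close> assms(2)]]
    by (simp add: shift_def ac_simps)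
  have unshifted: "(\<lambda>n. \<phi> (t + h n)) \<longlonglongrightarrow> \<psi> t"
    using co_converges_imp_tendsto[OF conv \<open>t \<in> T\<close>] by (simp add: shift_def)
  have "(\<lambda>n. dist (\<phi> (t + h n + \<tau>)) (\<phi> (t + h n))) \<longlonglongrightarrow> dist (\<psi> (t + \<tau>)) (\<psi> t)"
    by (rule tendsto_dist[OF shifted unshifted])
  moreover have "(\<lambda>n. dist (\<phi> (t + h n + \<tau>)) (\<phi> (t + h n))) \<longlonglongrightarrow> 0"
  proof (rule S_asymp_periodic_imp_tendsto[OF assms(3)])
    show "\<forall>n. t + h n \<in> T"
      using h time_set_add[OF assms(1) \<open>t \<in> T\<close>] by blast
    show "filterlim (\<lambda>n. t + h n) at_top sequentially"
      by (rule filterlim_tendsto_add_at_top[OF tendsto_const h_lim])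
  qed
  ultimately have "dist (\<psi> (t + \<tau>)) (\<psi> t) = 0"
    by (rule LIMSEQ_unique)
  then show "\<psi> (t + \<tau>) = \<psi> t"
    by simp
qed

lemma S_asymp_periodic_if_omega_limit_periodic:
  assumes "time_set T" and "\<tau> \<in> T" and "pos_lagrange_stable T \<phi>"
    and "\<forall>\<psi>\<in>omega_limit T \<phi>. periodic_on T \<tau> \<psi>"
  shows "S_asymp_periodic T \<tau> \<phi>"
proof (rule ccontr)
  assume "\<not> S_asymp_periodic T \<tau> \<phi>"
  then obtain e h where "e > 0" and h: "\<forall>n. h n \<in> T \<and> real n \<le> h n"
    and far: "\<forall>n. e \<le> dist (\<phi> (h n + \<tau>)) (\<phi> (h n))"
    by (rule not_S_asymp_periodicE)
  have "\<forall>n. h n \<in> T \<and> 0 \<le> h n"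
    using h by (meson of_nat_0_le_iff order_trans)
  moreover have "filterlim h at_top sequentially"
    by (rule filterlim_at_top_mono[OF filterlim_real_sequentially]) (use h in auto)
  ultimately obtain r \<psi> where "strict_mono r" and "\<psi> \<in> omega_limit T \<phi>"
    and conv: "co_converges T (\<lambda>n. shift \<phi> (h (r n))) \<psi>"
    by (rule pos_lagrange_stable_omega_limit_subseq[OF assms(3)])
  then have "\<psi> (0 + \<tau>) = \<psi> 0"
    using assms(4) time_set_zero[OF assms(1)] unfolding periodic_on_def by blast
  have shifted: "(\<lambda>n. \<phi> (h (r n) + \<tau>)) \<longlonglongrightarrow> \<psi> \<tau>"
    using co_converges_imp_tendsto[OF conv assms(2)] by (simp add: shift_def add.commute)
  have unshifted: "(\<lambda>n. \<phi> (h (r n))) \<longlonglongrightarrow> \<psi> \<tau>"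
    using co_converges_imp_tendsto[OF conv time_set_zero[OF assms(1)]] \<open>\<psi> (0 + \<tau>) = \<psi> 0\<close>
    by (simp add: shift_def)
  have "(\<lambda>n. dist (\<phi> (h (r n) + \<tau>)) (\<phi> (h (r n)))) \<longlonglongrightarrow> 0"
    using tendsto_dist[OF shifted unshifted] by simp
  then have "e \<le> 0"
    using far by (intro tendsto_lowerbound) auto
  with \<open>e > 0\<close> show False by simp
qed

theorem mainTheorem13:
  fixes T :: "real set" and \<phi> :: "real \<Rightarrow> 'a::complete_space" and \<tau> :: real
  assumes "time_set T"
    and "pos_lagrange_stable T \<phi>"
    and "\<tau> \<in> T" and "\<tau> > 0"
  shows "S_asymp_periodic T \<tau> \<phi> \<longleftrightarrow> (\<forall>\<psi>\<in>omega_limit T \<phi>. periodic_on T \<tau> \<psi>)"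
  using omega_limit_periodic_if_S_asymp_periodic[OF assms(1,3)]
    S_asymp_periodic_if_omega_limit_periodic[OF assms(1,3,2)]
  by blast

end
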